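(* Let $P_0=\mathcal{N}(m_0,\sigma_0^2)$ and $P_1=\mathcal{N}(m_1,\sigma_1^2)$ be univariate Gaussian measures with $m_i\in\mathbb{R}$ and $\sigma_i^2>0$, $i=0,1$. Set $F(t,x,y,z)=(1-t)x+ty+\sqrt{2t(1-t)}\,z$ and $Q=\mathcal{N}(0,\sigma_0\sigma_1)$. Then $(F,Q)\in\mathcal{F}_{\mathrm{SL}}(P_0,P_1)$.
   Context: $\mathcal{N}(m,s)$ denotes the Gaussian with mean $m$ and variance $s$ (here $\sigma_i>0$). Fix $1\le p<2$. A base interpolation path is a Borel map $F:[0,1]\times\mathbb{R}^{2d+\ell}\to\mathbb{R}^d$ with $t\mapsto F(t,x,y,z)\in W^{1,p}$, $F(0,x,y,z)=x$, $F(1,x,y,z)=y$ for a.e. $(x,y,z)$. A generalized interpolant is $(F,Q)$ with $Q$ absolutely continuous on $\mathbb{R}^\ell$, inducing $X_t=F(t,X_0,X_1,Z)$ with $(X_0,X_1,Z)\sim P_0\otimes P_1\otimes Q$. $\mathcal{S}(P_0,P_1)$: processes with a.s. continuous paths and $(X_0,X_1)\sim P_0\otimes P_1$. $\mathcal{S}_{\mathrm{SL}}(P_0,P_1)$ (for absolutely continuous $P_0,P_1$): those $X\in\mathcal{S}(P_0,P_1)$ whose conditional velocity $v(t,x)=\mathbb{E}[\dot X_t\mid X_t=x]$ is well defined, jointly measurable, Lipschitz in $x$ uniformly in $t$, and whose flow map ($\partial_t\phi=v(t,\phi)$, $\phi(0,x)=x$) satisfies $\partial_t^2\phi\equiv0$.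 $\mathcal{F}_{\mathrm{SL}}(P_0,P_1)$: generalized interpolants whose induced process is in $\mathcal{S}_{\mathrm{SL}}(P_0,P_1)$. *)

theory Defs
  imports "HOL-Probability.Probability"
begin

text \<open>Univariate setting d = 1, latent dimension l = 1.
  N(m, s) below is parametrised by the standard deviation, as in the library:
  gauss m sd is the Gaussian with mean m and variance sd^2.\<close>

definition gauss :: "real \<Rightarrow> real \<Rightarrow> real measure" where
  "gauss m sd = density lborel (normal_density m sd)"

text \<open>Sobolev space W^{1,p}(0,1) (as a.e.-classes): f agrees a.e. on [0,1] with
  c + integral from 0 to t of g, for some g in L^p(0,1).\<close>

definition W1p :: "real \<Rightarrow> (real \<Rightarrow> real) \<Rightarrow> bool" where
  "W1p p f \<longleftrightarrow> (\<exists>g c. g \<in> borel_measurable lborel \<and>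
      set_integrable lborel {0..1} (\<lambda>s. \<bar>g s\<bar> powr p) \<and>
      set_integrable lborel {0..1} g \<and>
      (AE t in lborel. t \<in> {0..1} \<longrightarrow> f t = c + (LINT s:{0..t}|lborel. g s)))"

definition base_interp_path :: "real \<Rightarrow> (real \<Rightarrow> real \<Rightarrow> real \<Rightarrow> real \<Rightarrow> real) \<Rightarrow> bool" where
  "base_interp_path p F \<longleftrightarrow>
     (\<lambda>(t, x, y, z). F t x y z) \<in> borel_measurable (restrict_space borel ({0..1} \<times> UNIV)) \<and>
     (AE w in (lborel :: (real \<times> real \<times> real) measure).
        W1p p (\<lambda>t. F t (fst w) (fst (snd w)) (snd (snd w))) \<and>
        F 0 (fst w) (fst (snd w)) (snd (snd w)) = fst w \<and>
        F 1 (fst w) (fst (snd w)) (snd (snd w)) = fst (snd w))"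

definition gen_interpolant :: "real \<Rightarrow> (real \<Rightarrow> real \<Rightarrow> real \<Rightarrow> real \<Rightarrow> real) \<Rightarrow> real measure \<Rightarrow> bool" where
  "gen_interpolant p F Q \<longleftrightarrow> base_interp_path p F \<and> prob_space Q \<and>
     sets Q = sets borel \<and> absolutely_continuous lborel Q"

definition induced_space :: "real measure \<Rightarrow> real measure \<Rightarrow> real measure \<Rightarrow> (real \<times> real \<times> real) measure" where
  "induced_space P0 P1 Q = P0 \<Otimes>\<^sub>M (P1 \<Otimes>\<^sub>M Q)"

definition induced_process :: "(real \<Rightarrow> real \<Rightarrow> real \<Rightarrow> real \<Rightarrow> real) \<Rightarrow> real \<Rightarrow> real \<times> real \<times> real \<Rightarrow> real" where
  "induced_process F t w = F t (fst w) (fst (snd w)) (snd (snd w))"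

definition in_S :: "'w measure \<Rightarrow> (real \<Rightarrow> 'w \<Rightarrow> real) \<Rightarrow> real measure \<Rightarrow> real measure \<Rightarrow> bool" where
  "in_S M X P0 P1 \<longleftrightarrow> prob_space M \<and>
     (\<forall>t\<in>{0..1}. X t \<in> borel_measurable M) \<and>
     (AE \<omega> in M. continuous_on {0..1} (\<lambda>t. X t \<omega>)) \<and>
     distr M (borel \<Otimes>\<^sub>M borel) (\<lambda>\<omega>. (X 0 \<omega>, X 1 \<omega>)) = P0 \<Otimes>\<^sub>M P1"

definition velocity :: "(real \<Rightarrow> 'w \<Rightarrow> real) \<Rightarrow> real \<Rightarrow> 'w \<Rightarrow> real" where
  "velocity X t \<omega> = deriv (\<lambda>s. X s \<omega>) t"

text \<open>v is (a version of) the conditional velocity E[dX_t | X_t = x]: for a.e. t,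
  the velocity is defined a.s. and integrable, and v(t, X_t) is the conditional
  expectation of the velocity given sigma(X_t).\<close>

definition is_cond_velocity :: "'w measure \<Rightarrow> (real \<Rightarrow> 'w \<Rightarrow> real) \<Rightarrow> (real \<Rightarrow> real \<Rightarrow> real) \<Rightarrow> bool" where
  "is_cond_velocity M X v \<longleftrightarrow>
     (AE t in lborel. t \<in> {0..1} \<longrightarrow>
        (AE \<omega> in M. (\<lambda>s. X s \<omega>) differentiable (at t)) \<and>
        integrable M (velocity X t) \<and>
        (AE \<omega> in M. real_cond_exp M (vimage_algebra (space M) (X t) borel) (velocity X t) \<omega>
                      = v t (X t \<omega>)))"

text \<open>phi is a flow map of v on [0,1]: d/dt phi = v(t, phi), phi(0,x) = x
  (in integral / Caratheodory form, since v is only measurable in t).\<close>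

definition is_flow :: "(real \<Rightarrow> real \<Rightarrow> real) \<Rightarrow> (real \<Rightarrow> real \<Rightarrow> real) \<Rightarrow> bool" where
  "is_flow v \<phi> \<longleftrightarrow> (\<forall>x. \<forall>t\<in>{0..1}.
      set_integrable lborel {0..t} (\<lambda>s. v s (\<phi> s x)) \<and>
      \<phi> t x = x + (LINT s:{0..t}|lborel. v s (\<phi> s x)))"

definition second_deriv_zero :: "(real \<Rightarrow> real \<Rightarrow> real) \<Rightarrow> bool" where
  "second_deriv_zero \<phi> \<longleftrightarrow> (\<forall>x. \<exists>d.
      (\<forall>t\<in>{0..1}. ((\<lambda>s. \<phi> s x) has_real_derivative d t) (at t within {0..1})) \<and>
      (\<forall>t\<in>{0..1}. (d has_real_derivative 0) (at t within {0..1})))"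

definition in_S_SL :: "'w measure \<Rightarrow> (real \<Rightarrow> 'w \<Rightarrow> real) \<Rightarrow> real measure \<Rightarrow> real measure \<Rightarrow> bool" where
  "in_S_SL M X P0 P1 \<longleftrightarrow>
     sets P0 = sets borel \<and> absolutely_continuous lborel P0 \<and>
     sets P1 = sets borel \<and> absolutely_continuous lborel P1 \<and>
     in_S M X P0 P1 \<and>
     (\<exists>v. is_cond_velocity M X v \<and>
          (\<lambda>(t, x). v t x) \<in> borel_measurable (restrict_space borel ({0..1} \<times> UNIV)) \<and>
          (\<exists>L. \<forall>t\<in>{0..1}. L-lipschitz_on UNIV (v t)) \<and>
          (\<exists>\<phi>. is_flow v \<phi>) \<and>
          (\<forall>\<phi>. is_flow v \<phi> \<longrightarrow> second_deriv_zero \<phi>))"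

definition in_F_SL :: "real \<Rightarrow> (real \<Rightarrow> real \<Rightarrow> real \<Rightarrow> real \<Rightarrow> real) \<Rightarrow> real measure \<Rightarrow>
    real measure \<Rightarrow> real measure \<Rightarrow> bool" where
  "in_F_SL p F Q P0 P1 \<longleftrightarrow> gen_interpolant p F Q \<and>
     in_S_SL (induced_space P0 P1 Q) (induced_process F) P0 P1"

end

theory Submission
  imports Defs
begin

(*
  Write X_t = m_t + Y1 + Y2 + Y3 with m_t = (1 - t) m0 + t m1 and the independent centred Gaussians
  Y1 = (1 - t) (X0 - m0), Y2 = t (X1 - m1), Y3 = sqrt (2 t (1 - t)) Z.  The choice Var Z = sigma0 sigma1
  makes Var X_t = ((1 - t) sigma0 + t sigma1)^2, and the velocity is the linear combination
  m1 - m0 - Y1 / (1 - t) + Y2 / t + (1 - 2 t) Y3 / (2 t (1 - t)).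

  Conditioning on a sum of independent centred Gaussians is linear regression:
  E[Y_i | Y1 + Y2 + Y3] = Var Y_i / Var (Y1 + Y2 + Y3) * (Y1 + Y2 + Y3).  For two summands this follows
  from the factorisation of the joint density of (Y1 + Y2, Y2); three summands reduce to two by Fubini.
  Hence the conditional velocity is v(t, x) = m1 - m0 + (sigma1 - sigma0) / ((1 - t) sigma0 + t sigma1) * (x - m_t),
  which is Lipschitz in x uniformly in t and whose only flow, x -> m_t + ((1 - t) sigma0 + t sigma1) / sigma0 * (x - m0),
  is affine in t.  The paths lie in W^{1,p} for p < 2 since their time derivative is O((t (1 - t))^(-1/2)),
  whose p-th power is a Beta integrand.
*)

lemma sets_gauss [simp, measurable_cong]: "sets (gauss m s) = sets borel"
  by (simp add: gauss_def)

lemma prob_space_gauss: "0 < s \<Longrightarrow> prob_space (gauss m s)"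
  unfolding gauss_def by (rule prob_space_normal_density)

lemma absolutely_continuous_gauss: "absolutely_continuous lborel (gauss m s)"
  unfolding gauss_def by (rule absolutely_continuousI_density) simp

lemma integrable_gauss_id: "0 < s \<Longrightarrow> integrable (gauss m s) (\<lambda>x. x)"
  unfolding gauss_def
  by (subst integrable_density) (auto simp: integrable_normal_moment_nz_1)

lemma integrable_if_distr_gauss:
  assumes [measurable]: "f \<in> borel_measurable M"
    and "distr M borel f = gauss m s" and "0 < s"
  shows "integrable M f"
proof -
  have "integrable (distr M borel f) (\<lambda>x. x)"
    using assms(2,3) integrable_gauss_id by simp
  then show ?thesis by (subst (asm) integrable_distr_eq) auto
qed

lemma distr_gauss_affine:
  assumes "0 < \<sigma>" "\<alpha> \<noteq> 0"
  shows "distr (gauss \<mu> \<sigma>) borel (\<lambda>x. \<beta> + \<alpha> * x) = gauss (\<beta> + \<alpha> * \<mu>) (\<bar>\<alpha>\<bar> * \<sigma>)"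
proof -
  interpret prob_space "gauss \<mu> \<sigma>" using prob_space_gauss[OF assms(1)] .
  have "distributed (gauss \<mu> \<sigma>) lborel (\<lambda>x. x) (normal_density \<mu> \<sigma>)"
    by (auto simp: distributed_def distr_id2 gauss_def)
  from normal_density_affine[OF this assms]
  have "distr (gauss \<mu> \<sigma>) lborel (\<lambda>x. \<beta> + \<alpha> * x) = gauss (\<beta> + \<alpha> * \<mu>) (\<bar>\<alpha>\<bar> * \<sigma>)"
    by (simp add: distributed_def gauss_def)
  moreover have "distr (gauss \<mu> \<sigma>) borel (\<lambda>x. \<beta> + \<alpha> * x) = distr (gauss \<mu> \<sigma>) lborel (\<lambda>x. \<beta> + \<alpha> * x)"
    by (rule distr_cong) auto
  ultimately show ?thesis by simp
qed

lemma distr_pair_snd: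
  assumes "prob_space M1" "sigma_finite_measure M2"
  shows "distr (M1 \<Otimes>\<^sub>M M2) M2 snd = M2"
proof -
  interpret M1: prob_space M1 by fact
  interpret M2: sigma_finite_measure M2 by fact
  interpret pair_sigma_finite M1 M2 ..
  have "distr (M1 \<Otimes>\<^sub>M M2) M2 snd = distr (distr (M2 \<Otimes>\<^sub>M M1) (M1 \<Otimes>\<^sub>M M2) (\<lambda>(x, y). (y, x))) M2 snd"
    by (simp add: distr_pair_swap[symmetric])
  also have "\<dots> = distr (M2 \<Otimes>\<^sub>M M1) M2 fst"
    by (subst distr_distr) (auto intro!: distr_cong)
  also have "\<dots> = M2" by (rule M1.distr_pair_fst)
  finally show ?thesis .
qed

lemma integrable_fst_comp:
  fixes f :: "'a \<Rightarrow> real"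
  assumes "prob_space M2" "integrable M1 f"
  shows "integrable (M1 \<Otimes>\<^sub>M M2) (\<lambda>\<omega>. f (fst \<omega>))"
proof -
  interpret M2: prob_space M2 by fact
  have [measurable]: "f \<in> borel_measurable M1" using assms(2) by auto
  have "integrable (distr (M1 \<Otimes>\<^sub>M M2) M1 fst) f"
    using assms(2) by (simp add: M2.distr_pair_fst)
  then show ?thesis by (subst (asm) integrable_distr_eq) auto
qed

lemma integrable_snd_comp:
  fixes f :: "'b \<Rightarrow> real"
  assumes "prob_space M1" "sigma_finite_measure M2" "integrable M2 f"
  shows "integrable (M1 \<Otimes>\<^sub>M M2) (\<lambda>\<omega>. f (snd \<omega>))"
proof -
  have [measurable]: "f \<in> borel_measurable M2" using assms(3) by auto
  have "integrable (distr (M1 \<Otimes>\<^sub>M M2) M2 snd) f"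
    using assms by (simp add: distr_pair_snd)
  then show ?thesis by (subst (asm) integrable_distr_eq) auto
qed

lemma integrable_mult_bounded:
  fixes f g :: "'a \<Rightarrow> real"
  assumes "integrable M f" "g \<in> borel_measurable M" "\<And>x. x \<in> space M \<Longrightarrow> \<bar>g x\<bar> \<le> K"
  shows "integrable M (\<lambda>x. f x * g x)"
proof (rule Bochner_Integration.integrable_bound)
  show "integrable M (\<lambda>x. K * f x)" using assms(1) by simp
  show "AE x in M. norm (f x * g x) \<le> norm (K * f x)"
  proof (rule AE_I2)
    fix x assume "x \<in> space M"
    then have "\<bar>g x\<bar> \<le> \<bar>K\<bar>" using assms(3) by fastforce
    then have "\<bar>f x\<bar> * \<bar>g x\<bar> \<le> \<bar>f x\<bar> * \<bar>K\<bar>"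
      by (rule mult_left_mono) simp
    then show "norm (f x * g x) \<le> norm (K * f x)"
      by (simp add: abs_mult mult.commute)
  qed
qed (use assms in auto)

lemma distr_pair_comp:
  assumes "prob_space M1" "prob_space M2"
    and [measurable]: "f \<in> borel_measurable M1" "g \<in> borel_measurable M2"
  shows "distr (M1 \<Otimes>\<^sub>M M2) (borel \<Otimes>\<^sub>M borel) (\<lambda>\<omega>. (f (fst \<omega>), g (snd \<omega>))) =
    distr M1 borel f \<Otimes>\<^sub>M distr M2 borel g"
proof -
  have "sigma_finite_measure (distr M2 borel g)"
    using assms(2) by (intro prob_space_imp_sigma_finite prob_space.prob_space_distr) auto
  from pair_measure_distr[OF assms(3,4) this] show ?thesis
    by (simp add: case_prod_beta')
qed

lemma distr_sum_gauss:
  assumes pos: "0 < a" "0 < b"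
  shows "distr (gauss \<mu> a \<Otimes>\<^sub>M gauss \<nu> b) borel (\<lambda>w. fst w + snd w) = gauss (\<mu> + \<nu>) (sqrt (a\<^sup>2 + b\<^sup>2))"
proof -
  let ?G = "gauss \<mu> a \<Otimes>\<^sub>M gauss \<nu> b"
  interpret P1: prob_space "gauss \<mu> a" using prob_space_gauss[OF pos(1)] .
  interpret P2: prob_space "gauss \<nu> b" using prob_space_gauss[OF pos(2)] .
  interpret P: pair_prob_space "gauss \<mu> a" "gauss \<nu> b" ..
  have "distr ?G borel fst = distr ?G (gauss \<mu> a) fst"
    by (rule distr_cong) auto
  then have d1: "distr ?G borel fst = gauss \<mu> a"
    by (simp add: P2.distr_pair_fst)
  have "distr ?G borel snd = distr ?G (gauss \<nu> b) snd"
    by (rule distr_cong) auto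
  then have d2: "distr ?G borel snd = gauss \<nu> b"
    by (simp add: distr_pair_snd P1.prob_space_axioms P2.sigma_finite_measure_axioms)
  have "distr ?G (borel \<Otimes>\<^sub>M borel) (\<lambda>x. (fst x, snd x)) = ?G"
    using distr_id2[of "borel \<Otimes>\<^sub>M borel" ?G] sets_pair_measure_cong[OF sets_gauss sets_gauss, of \<mu> a \<nu> b]
    by simp
  then have "P.indep_var borel fst borel snd"
    unfolding P.indep_var_distribution_eq using d1 d2 by simp
  moreover have "distributed ?G lborel fst (normal_density \<mu> a)"
    using d1 distr_cong[OF refl sets_lborel, of ?G fst fst] by (simp add: distributed_def gauss_def)
  moreover have "distributed ?G lborel snd (normal_density \<nu> b)"
    using d2 distr_cong[OF refl sets_lborel, of ?G snd snd] by (simp add: distributed_def gauss_def)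
  ultimately have "distributed ?G lborel (\<lambda>x. fst x + snd x) (normal_density (\<mu> + \<nu>) (sqrt (a\<^sup>2 + b\<^sup>2)))"
    by (rule P.add_indep_normal[OF _ pos])
  then have "distr ?G lborel (\<lambda>x. fst x + snd x) = gauss (\<mu> + \<nu>) (sqrt (a\<^sup>2 + b\<^sup>2))"
    by (simp add: distributed_def gauss_def)
  then show ?thesis
    using distr_cong[OF refl sets_lborel, of ?G "\<lambda>x. fst x + snd x" "\<lambda>x. fst x + snd x"] by simp
qed

lemma distr_sum_gauss_comp:
  assumes "prob_space M1" "prob_space M2"
    and [measurable]: "f \<in> borel_measurable M1" "g \<in> borel_measurable M2"
    and "distr M1 borel f = gauss \<mu> a" "distr M2 borel g = gauss \<nu> b" "0 < a" "0 < b"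
  shows "distr (M1 \<Otimes>\<^sub>M M2) borel (\<lambda>\<omega>. f (fst \<omega>) + g (snd \<omega>)) = gauss (\<mu> + \<nu>) (sqrt (a\<^sup>2 + b\<^sup>2))"
proof -
  have "distr (M1 \<Otimes>\<^sub>M M2) borel (\<lambda>\<omega>. f (fst \<omega>) + g (snd \<omega>)) =
      distr (distr (M1 \<Otimes>\<^sub>M M2) (borel \<Otimes>\<^sub>M borel) (\<lambda>\<omega>. (f (fst \<omega>), g (snd \<omega>)))) borel (\<lambda>w. fst w + snd w)"
    by (subst distr_distr) (auto simp: comp_def)
  also have "\<dots> = gauss (\<mu> + \<nu>) (sqrt (a\<^sup>2 + b\<^sup>2))"
    using assms by (simp add: distr_pair_comp distr_sum_gauss)
  finally show ?thesis .
qed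

lemma normal_density_shear_factor:
  assumes [arith]: "0 < \<sigma>" "0 < \<tau>"
  shows "normal_density 0 \<sigma> (x - y) * normal_density 0 \<tau> y =
    normal_density 0 (sqrt (\<sigma>\<^sup>2 + \<tau>\<^sup>2)) x *
    normal_density (\<tau>\<^sup>2 * x / (\<sigma>\<^sup>2 + \<tau>\<^sup>2)) (sqrt ((\<sigma>\<^sup>2 * \<tau>\<^sup>2) / (\<sigma>\<^sup>2 + \<tau>\<^sup>2))) y"
proof -
  define \<sigma>' \<tau>' where "\<sigma>' = \<sigma>\<^sup>2" and "\<tau>' = \<tau>\<^sup>2"
  then have [simp, arith]: "0 < \<sigma>'" "0 < \<tau>'"
    by simp_all
  have sqrt: "(sqrt (2 * pi * (\<sigma>' + \<tau>')) * sqrt (2 * pi * (\<sigma>' * \<tau>') / (\<sigma>' + \<tau>'))) =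
    (sqrt (2 * pi * \<sigma>') * sqrt (2 * pi * \<tau>'))"
    by (subst power_eq_iff_eq_base[symmetric, where n=2])
       (simp_all add: real_sqrt_mult[symmetric] power2_eq_square)
  show ?thesis
    apply (simp add: normal_density_def \<sigma>'_def[symmetric] \<tau>'_def[symmetric] sqrt mult_exp_exp)
    apply (simp add: divide_simps power2_eq_square)
    apply (simp add: algebra_simps)
    done
qed

definition shear_density :: "real \<Rightarrow> real \<Rightarrow> real \<times> real \<Rightarrow> real" where
  "shear_density \<sigma> \<tau> w = normal_density 0 \<sigma> (fst w - snd w) * normal_density 0 \<tau> (snd w)"

lemma shear_density_nonneg: "0 \<le> shear_density \<sigma> \<tau> w"
  by (simp add: shear_density_def)

lemma shear_density_measurable [measurable]: "shear_density \<sigma> \<tau> \<in> borel_measurable (borel \<Otimes>\<^sub>M borel)"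
  unfolding shear_density_def normal_density_def by measurable

lemma distr_gauss_shear:
  assumes "0 < \<sigma>" "0 < \<tau>"
  shows "distr (gauss 0 \<sigma> \<Otimes>\<^sub>M gauss 0 \<tau>) (lborel \<Otimes>\<^sub>M lborel) (\<lambda>w. (fst w + snd w, snd w)) =
    density (lborel \<Otimes>\<^sub>M lborel) (shear_density \<sigma> \<tau>)"
proof (rule measure_eqI)
  fix A assume "A \<in> sets (distr (gauss 0 \<sigma> \<Otimes>\<^sub>M gauss 0 \<tau>) (lborel \<Otimes>\<^sub>M lborel) (\<lambda>w. (fst w + snd w, snd w)))"
  then have A[measurable]: "A \<in> sets (lborel \<Otimes>\<^sub>M lborel)" "A \<in> sets (borel \<Otimes>\<^sub>M borel)"
    by (simp_all add: sets_pair_measure_cong[OF sets_lborel sets_lborel])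
  have G: "gauss 0 \<sigma> \<Otimes>\<^sub>M gauss 0 \<tau> =
      density (lborel \<Otimes>\<^sub>M lborel) (\<lambda>(u, r). ennreal (normal_density 0 \<sigma> u) * ennreal (normal_density 0 \<tau> r))"
    unfolding gauss_def using prob_space_gauss[OF assms(2)]
    by (intro pair_measure_density)
       (auto simp: gauss_def prob_space_imp_sigma_finite intro: lborel.sigma_finite_measure_axioms)
  have "emeasure (distr (gauss 0 \<sigma> \<Otimes>\<^sub>M gauss 0 \<tau>) (lborel \<Otimes>\<^sub>M lborel) (\<lambda>w. (fst w + snd w, snd w))) A =
      (\<integral>\<^sup>+ w. indicator A w \<partial>distr (gauss 0 \<sigma> \<Otimes>\<^sub>M gauss 0 \<tau>) (lborel \<Otimes>\<^sub>M lborel) (\<lambda>w. (fst w + snd w, snd w)))"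
    using A by simp
  also have "\<dots> = (\<integral>\<^sup>+ w. indicator A (fst w + snd w, snd w) \<partial>(gauss 0 \<sigma> \<Otimes>\<^sub>M gauss 0 \<tau>))"
    by (subst nn_integral_distr) auto
  also have "\<dots> = (\<integral>\<^sup>+ r. \<integral>\<^sup>+ u. ennreal (normal_density 0 \<sigma> u) * ennreal (normal_density 0 \<tau> r) *
       indicator A (u + r, r) \<partial>lborel \<partial>lborel)"
    unfolding G by (subst nn_integral_density) (auto simp: case_prod_beta lborel_pair.nn_integral_snd[symmetric])
  also have "\<dots> = (\<integral>\<^sup>+ r. \<integral>\<^sup>+ s. ennreal (shear_density \<sigma> \<tau> (s, r)) * indicator A (s, r) \<partial>lborel \<partial>lborel)"
  proof (rule nn_integral_cong)
    fix r :: real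
    show "(\<integral>\<^sup>+ u. ennreal (normal_density 0 \<sigma> u) * ennreal (normal_density 0 \<tau> r) * indicator A (u + r, r) \<partial>lborel) =
        (\<integral>\<^sup>+ s. ennreal (shear_density \<sigma> \<tau> (s, r)) * indicator A (s, r) \<partial>lborel)"
      by (subst nn_integral_real_affine[where c=1 and t="-r"]) (auto simp: shear_density_def ennreal_mult')
  qed
  also have "\<dots> = emeasure (density (lborel \<Otimes>\<^sub>M lborel) (shear_density \<sigma> \<tau>)) A"
    by (subst emeasure_density) (auto simp: lborel_pair.nn_integral_snd[symmetric] case_prod_beta)
  finally show "emeasure (distr (gauss 0 \<sigma> \<Otimes>\<^sub>M gauss 0 \<tau>) (lborel \<Otimes>\<^sub>M lborel) (\<lambda>w. (fst w + snd w, snd w))) A =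
      emeasure (density (lborel \<Otimes>\<^sub>M lborel) (shear_density \<sigma> \<tau>)) A" .
qed simp

(* Given the sum s, the second summand is Gaussian with mean tau^2 s / (sigma^2 + tau^2). *)
lemma integral_shear_density_contrast:
  assumes "0 < \<sigma>" "0 < \<tau>"
  shows "(\<integral>r. shear_density \<sigma> \<tau> (s, r) * (\<tau>\<^sup>2 * (s - r) - \<sigma>\<^sup>2 * r) \<partial>lborel) = 0"
proof -
  define V where "V = \<sigma>\<^sup>2 + \<tau>\<^sup>2"
  define m where "m = \<tau>\<^sup>2 * s / V"
  define \<rho> where "\<rho> = sqrt (\<sigma>\<^sup>2 * \<tau>\<^sup>2 / V)"
  have "0 < V" "0 < \<rho>"
    using assms by (auto simp: V_def \<rho>_def intro!: add_pos_pos divide_pos_pos)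
  have "shear_density \<sigma> \<tau> (s, r) = normal_density 0 (sqrt V) s * normal_density m \<rho> r" for r
    using assms by (simp add: shear_density_def normal_density_shear_factor V_def m_def \<rho>_def)
  then have "(\<integral>r. shear_density \<sigma> \<tau> (s, r) * (\<tau>\<^sup>2 * (s - r) - \<sigma>\<^sup>2 * r) \<partial>lborel) =
      (\<integral>r. normal_density 0 (sqrt V) s * (\<tau>\<^sup>2 * s * normal_density m \<rho> r - V * (normal_density m \<rho> r * r)) \<partial>lborel)"
    by (simp add: V_def algebra_simps)
  also have "\<dots> = normal_density 0 (sqrt V) s * (\<tau>\<^sup>2 * s - V * m)"
    using \<open>0 < \<rho>\<close> by (simp add: integral_normal_moment_nz_1 integrable_normal_moment_nz_1)
  also have "\<dots> = 0"
    using \<open>0 < V\<close> by (simp add: m_def)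
  finally show ?thesis .
qed

lemma gauss_pair_contrast:
  assumes pos: "0 < \<sigma>" "0 < \<tau>"
    and [measurable]: "h \<in> borel_measurable borel" and h_bound: "\<And>s. \<bar>h s\<bar> \<le> K"
  shows "integrable (gauss 0 \<sigma> \<Otimes>\<^sub>M gauss 0 \<tau>) (\<lambda>w. (\<tau>\<^sup>2 * fst w - \<sigma>\<^sup>2 * snd w) * h (fst w + snd w))"
    and "(\<integral>w. (\<tau>\<^sup>2 * fst w - \<sigma>\<^sup>2 * snd w) * h (fst w + snd w) \<partial>(gauss 0 \<sigma> \<Otimes>\<^sub>M gauss 0 \<tau>)) = 0"
proof -
  let ?G = "gauss 0 \<sigma> \<Otimes>\<^sub>M gauss 0 \<tau>"
  let ?T = "\<lambda>w::real \<times> real. (fst w + snd w, snd w)"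
  define g where "g w = (\<tau>\<^sup>2 * (fst w - snd w) - \<sigma>\<^sup>2 * snd w) * h (fst w)" for w :: "real \<times> real"
  have [measurable]: "g \<in> borel_measurable (lborel \<Otimes>\<^sub>M lborel)"
    unfolding g_def by measurable
  have g_T: "(\<lambda>w. (\<tau>\<^sup>2 * fst w - \<sigma>\<^sup>2 * snd w) * h (fst w + snd w)) = (\<lambda>w. g (?T w))"
    by (simp add: g_def fun_eq_iff)
  have "integrable ?G (\<lambda>w. fst w)" "integrable ?G (\<lambda>w. snd w)"
    using pos by (auto intro!: integrable_fst_comp[where f="\<lambda>x. x"] integrable_snd_comp[where f="\<lambda>x. x"]
        prob_space_gauss integrable_gauss_id prob_space_imp_sigma_finite)
  then have "integrable ?G (\<lambda>w. \<tau>\<^sup>2 * fst w - \<sigma>\<^sup>2 * snd w)"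
    by auto
  then show int: "integrable ?G (\<lambda>w. (\<tau>\<^sup>2 * fst w - \<sigma>\<^sup>2 * snd w) * h (fst w + snd w))"
    using h_bound by (intro integrable_mult_bounded[where g="\<lambda>w. h (fst w + snd w)"]) auto
  have T_distr: "distr ?G (lborel \<Otimes>\<^sub>M lborel) ?T = density (lborel \<Otimes>\<^sub>M lborel) (shear_density \<sigma> \<tau>)"
    by (rule distr_gauss_shear[OF pos])
  have "integrable (density (lborel \<Otimes>\<^sub>M lborel) (shear_density \<sigma> \<tau>)) g"
    using int unfolding g_T T_distr[symmetric] by (subst integrable_distr_eq) auto
  then have int_density: "integrable (lborel \<Otimes>\<^sub>M lborel) (\<lambda>w. shear_density \<sigma> \<tau> w * g w)"
    by (subst (asm) integrable_density) (auto simp: shear_density_nonneg)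
  have "(\<integral>w. (\<tau>\<^sup>2 * fst w - \<sigma>\<^sup>2 * snd w) * h (fst w + snd w) \<partial>?G) =
      (\<integral>w. g w \<partial>distr ?G (lborel \<Otimes>\<^sub>M lborel) ?T)"
    unfolding g_T by (subst integral_distr) auto
  also have "\<dots> = (\<integral>w. shear_density \<sigma> \<tau> w * g w \<partial>(lborel \<Otimes>\<^sub>M lborel))"
    unfolding T_distr by (subst integral_density) (auto simp: shear_density_nonneg)
  also have "\<dots> = (\<integral>s. (\<integral>r. shear_density \<sigma> \<tau> (s, r) * g (s, r) \<partial>lborel) \<partial>lborel)"
    using lborel_pair.integral_fst'[OF int_density] by simp
  also have "\<dots> = (\<integral>s. h s * (\<integral>r. shear_density \<sigma> \<tau> (s, r) * (\<tau>\<^sup>2 * (s - r) - \<sigma>\<^sup>2 * r) \<partial>lborel) \<partial>lborel)"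
    by (subst integral_mult_right_zero[symmetric]) (simp add: g_def ac_simps)
  also have "\<dots> = 0"
    by (simp add: integral_shear_density_contrast[OF pos])
  finally show "(\<integral>w. (\<tau>\<^sup>2 * fst w - \<sigma>\<^sup>2 * snd w) * h (fst w + snd w) \<partial>?G) = 0" .
qed

lemma gauss_contrast:
  assumes "prob_space M1" "prob_space M2"
    and [measurable]: "f \<in> borel_measurable M1" "g \<in> borel_measurable M2"
    and "distr M1 borel f = gauss 0 a" "distr M2 borel g = gauss 0 b" and pos: "0 < a" "0 < b"
    and [measurable]: "h \<in> borel_measurable borel" and h_bound: "\<And>s. \<bar>h s\<bar> \<le> K"
  shows "integrable (M1 \<Otimes>\<^sub>M M2) (\<lambda>\<omega>. (b\<^sup>2 * f (fst \<omega>) - a\<^sup>2 * g (snd \<omega>)) * h (f (fst \<omega>) + g (snd \<omega>)))"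
    and "(\<integral>\<omega>. (b\<^sup>2 * f (fst \<omega>) - a\<^sup>2 * g (snd \<omega>)) * h (f (fst \<omega>) + g (snd \<omega>)) \<partial>(M1 \<Otimes>\<^sub>M M2)) = 0"
proof -
  define k where "k w = (b\<^sup>2 * fst w - a\<^sup>2 * snd w) * h (fst w + snd w)" for w :: "real \<times> real"
  have [measurable]: "k \<in> borel_measurable (borel \<Otimes>\<^sub>M borel)"
    unfolding k_def by measurable
  have k_comp: "(\<lambda>\<omega>. (b\<^sup>2 * f (fst \<omega>) - a\<^sup>2 * g (snd \<omega>)) * h (f (fst \<omega>) + g (snd \<omega>))) =
      (\<lambda>\<omega>. k (f (fst \<omega>), g (snd \<omega>)))"
    by (simp add: k_def)
  have distr_fg: "distr (M1 \<Otimes>\<^sub>M M2) (borel \<Otimes>\<^sub>M borel) (\<lambda>\<omega>. (f (fst \<omega>), g (snd \<omega>))) = gauss 0 a \<Otimes>\<^sub>M gauss 0 b"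
    using assms by (simp add: distr_pair_comp)
  have "integrable (gauss 0 a \<Otimes>\<^sub>M gauss 0 b) k" "integral\<^sup>L (gauss 0 a \<Otimes>\<^sub>M gauss 0 b) k = 0"
    using gauss_pair_contrast[OF pos, of h K] h_bound by (simp_all add: k_def[abs_def])
  then show "integrable (M1 \<Otimes>\<^sub>M M2) (\<lambda>\<omega>. (b\<^sup>2 * f (fst \<omega>) - a\<^sup>2 * g (snd \<omega>)) * h (f (fst \<omega>) + g (snd \<omega>)))"
    and "(\<integral>\<omega>. (b\<^sup>2 * f (fst \<omega>) - a\<^sup>2 * g (snd \<omega>)) * h (f (fst \<omega>) + g (snd \<omega>)) \<partial>(M1 \<Otimes>\<^sub>M M2)) = 0"
    unfolding k_comp distr_fg[symmetric] by (simp_all add: integrable_distr_eq integral_distr)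
qed

lemma real_cond_exp_vimage_eqI:
  assumes "prob_space M"
    and [measurable]: "X \<in> borel_measurable M" "w \<in> borel_measurable borel"
    and "integrable M V" "integrable M (\<lambda>\<omega>. w (X \<omega>))"
    and "\<And>B. B \<in> sets borel \<Longrightarrow>
      (\<integral>\<omega>. indicator B (X \<omega>) * V \<omega> \<partial>M) = (\<integral>\<omega>. indicator B (X \<omega>) * w (X \<omega>) \<partial>M)"
  shows "AE \<omega> in M. real_cond_exp M (vimage_algebra (space M) X borel) V \<omega> = w (X \<omega>)"
proof -
  let ?F = "vimage_algebra (space M) X borel"
  interpret prob_space M by fact
  interpret finite_measure_subalgebra M ?F
  proof unfold_locales
    show "subalgebra M ?F"
      unfolding subalgebra_def using sets_image_in_sets[of M "space M" X borel] by simp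
  qed
  show ?thesis
  proof (rule real_cond_exp_charact)
    fix A assume "A \<in> sets ?F"
    then obtain B where B: "B \<in> sets borel" and A: "A = X -` B \<inter> space M"
      by (auto simp: sets_vimage_algebra2)
    have "indicator A \<omega> = (indicator B (X \<omega>) :: real)" if "\<omega> \<in> space M" for \<omega>
      using that by (simp add: A indicator_def)
    then show "(\<integral>\<omega>\<in>A. V \<omega> \<partial>M) = (\<integral>\<omega>\<in>A. w (X \<omega>) \<partial>M)"
      unfolding set_lebesgue_integral_def using assms(6)[OF B]
      by (simp cong: Bochner_Integration.integral_cong)
  next
    have "X \<in> measurable ?F borel"
      by (rule measurable_vimage_algebra1) simp
    then show "(\<lambda>\<omega>. w (X \<omega>)) \<in> borel_measurable ?F"
      by measurable
  qed (use assms in auto)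
qed

locale centered_gauss_triple =
  M1: prob_space M1 + M2: prob_space M2 + M3: prob_space M3
  for M1 :: "'a measure" and M2 :: "'b measure" and M3 :: "'c measure" +
  fixes f1 :: "'a \<Rightarrow> real" and f2 :: "'b \<Rightarrow> real" and f3 :: "'c \<Rightarrow> real" and a1 a2 a3 :: real
  assumes measurable_f [measurable]:
      "f1 \<in> borel_measurable M1" "f2 \<in> borel_measurable M2" "f3 \<in> borel_measurable M3"
    and distr_f: "distr M1 borel f1 = gauss 0 a1" "distr M2 borel f2 = gauss 0 a2" "distr M3 borel f3 = gauss 0 a3"
    and sd_pos: "0 < a1" "0 < a2" "0 < a3"
begin

abbreviation M :: "('a \<times> 'b \<times> 'c) measure" where
  "M \<equiv> M1 \<Otimes>\<^sub>M (M2 \<Otimes>\<^sub>M M3)"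

sublocale M23: pair_prob_space M2 M3 ..

sublocale M123: pair_prob_space M1 "M2 \<Otimes>\<^sub>M M3" ..

lemma integrable_coordinate_mult:
  assumes "g \<in> borel_measurable M" "\<And>\<omega>. \<bar>g \<omega>\<bar> \<le> K"
  shows "integrable M (\<lambda>\<omega>. f1 (fst \<omega>) * g \<omega>)"
    and "integrable M (\<lambda>\<omega>. f2 (fst (snd \<omega>)) * g \<omega>)"
    and "integrable M (\<lambda>\<omega>. f3 (snd (snd \<omega>)) * g \<omega>)"
proof -
  have int_f: "integrable M1 f1" "integrable M2 f2" "integrable M3 f3"
    using distr_f sd_pos by (auto intro: integrable_if_distr_gauss)
  have int_M23: "integrable (M2 \<Otimes>\<^sub>M M3) (\<lambda>w. f2 (fst w))" "integrable (M2 \<Otimes>\<^sub>M M3) (\<lambda>w. f3 (snd w))"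
    using int_f by (auto intro: integrable_fst_comp integrable_snd_comp M2.prob_space_axioms
        M3.prob_space_axioms M3.sigma_finite_measure_axioms)
  have sf_M23: "sigma_finite_measure (M2 \<Otimes>\<^sub>M M3)"
    by (rule prob_space_imp_sigma_finite[OF M23.prob_space_axioms])
  show "integrable M (\<lambda>\<omega>. f1 (fst \<omega>) * g \<omega>)"
    using assms int_f by (intro integrable_mult_bounded integrable_fst_comp M23.prob_space_axioms) auto
  show "integrable M (\<lambda>\<omega>. f2 (fst (snd \<omega>)) * g \<omega>)"
    using assms int_M23 sf_M23
    by (intro integrable_mult_bounded integrable_snd_comp[where f="\<lambda>w. f2 (fst w)"] M1.prob_space_axioms) auto
  show "integrable M (\<lambda>\<omega>. f3 (snd (snd \<omega>)) * g \<omega>)"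
    using assms int_M23 sf_M23
    by (intro integrable_mult_bounded integrable_snd_comp[where f="\<lambda>w. f3 (snd w)"] M1.prob_space_axioms) auto
qed

lemma integrable_affine_combination:
  "integrable M (\<lambda>\<omega>. d + (c1 * f1 (fst \<omega>) + c2 * f2 (fst (snd \<omega>)) + c3 * f3 (snd (snd \<omega>))))"
  using integrable_coordinate_mult[of "\<lambda>_. 1" 1] by simp

lemma integral_contrast_snd_components:
  assumes [measurable]: "h \<in> borel_measurable borel" and h_bound: "\<And>s. \<bar>h s\<bar> \<le> K"
  shows "(\<integral>\<omega>. (a3\<^sup>2 * f2 (fst (snd \<omega>)) - a2\<^sup>2 * f3 (snd (snd \<omega>))) *
      h (f1 (fst \<omega>) + f2 (fst (snd \<omega>)) + f3 (snd (snd \<omega>))) \<partial>M) = 0"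
proof -
  let ?F = "\<lambda>\<omega>. (a3\<^sup>2 * f2 (fst (snd \<omega>)) - a2\<^sup>2 * f3 (snd (snd \<omega>))) *
      h (f1 (fst \<omega>) + f2 (fst (snd \<omega>)) + f3 (snd (snd \<omega>)))"
  have "integrable M ?F"
    using integrable_coordinate_mult(2,3)[of "\<lambda>\<omega>. h (f1 (fst \<omega>) + f2 (fst (snd \<omega>)) + f3 (snd (snd \<omega>)))" K]
      h_bound
    by (auto simp: left_diff_distrib mult.assoc)
  moreover have "(\<integral>w. ?F (x, w) \<partial>(M2 \<Otimes>\<^sub>M M3)) = 0" for x
    using gauss_contrast(2)[OF M2.prob_space_axioms M3.prob_space_axioms measurable_f(2,3) distr_f(2,3)
        sd_pos(2,3), of "\<lambda>u. h (f1 x + u)" K] h_bound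
    by (simp add: add.assoc)
  ultimately show ?thesis
    using M123.integral_fst'[of ?F] by simp
qed

lemma integral_contrast_fst_component:
  assumes [measurable]: "h \<in> borel_measurable borel" and h_bound: "\<And>s. \<bar>h s\<bar> \<le> K"
  shows "(\<integral>\<omega>. ((a2\<^sup>2 + a3\<^sup>2) * f1 (fst \<omega>) - a1\<^sup>2 * (f2 (fst (snd \<omega>)) + f3 (snd (snd \<omega>)))) *
      h (f1 (fst \<omega>) + f2 (fst (snd \<omega>)) + f3 (snd (snd \<omega>))) \<partial>M) = 0"
proof -
  have g_measurable: "(\<lambda>w. f2 (fst w) + f3 (snd w)) \<in> borel_measurable (M2 \<Otimes>\<^sub>M M3)"
    by measurable
  have distr_g: "distr (M2 \<Otimes>\<^sub>M M3) borel (\<lambda>w. f2 (fst w) + f3 (snd w)) = gauss 0 (sqrt (a2\<^sup>2 + a3\<^sup>2))"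
    using distr_sum_gauss_comp[OF M2.prob_space_axioms M3.prob_space_axioms measurable_f(2,3) distr_f(2,3)
        sd_pos(2,3)] by simp
  have "0 < sqrt (a2\<^sup>2 + a3\<^sup>2)"
    using sd_pos by (simp add: add_pos_pos)
  from gauss_contrast(2)[OF M1.prob_space_axioms M23.prob_space_axioms measurable_f(1) g_measurable
      distr_f(1) distr_g sd_pos(1) this assms]
  show ?thesis by (simp add: add.assoc)
qed

lemma integral_coordinate_mult_proportional:
  assumes [measurable]: "h \<in> borel_measurable borel" and h_bound: "\<And>s. \<bar>h s\<bar> \<le> K"
  defines "S \<equiv> \<lambda>\<omega>. f1 (fst \<omega>) + f2 (fst (snd \<omega>)) + f3 (snd (snd \<omega>))"
  shows "\<exists>q. (\<integral>\<omega>. f1 (fst \<omega>) * h (S \<omega>) \<partial>M) = a1\<^sup>2 * q \<and> (\<integral>\<omega>. f2 (fst (snd \<omega>)) * h (S \<omega>) \<partial>M) = a2\<^sup>2 * q \<and>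
    (\<integral>\<omega>. f3 (snd (snd \<omega>)) * h (S \<omega>) \<partial>M) = a3\<^sup>2 * q"
proof -
  define E1 where "E1 = (\<integral>\<omega>. f1 (fst \<omega>) * h (S \<omega>) \<partial>M)"
  define E2 where "E2 = (\<integral>\<omega>. f2 (fst (snd \<omega>)) * h (S \<omega>) \<partial>M)"
  define E3 where "E3 = (\<integral>\<omega>. f3 (snd (snd \<omega>)) * h (S \<omega>) \<partial>M)"
  define q where "q = E2 / a2\<^sup>2"
  have int: "integrable M (\<lambda>\<omega>. f1 (fst \<omega>) * h (S \<omega>))" "integrable M (\<lambda>\<omega>. f2 (fst (snd \<omega>)) * h (S \<omega>))"
      "integrable M (\<lambda>\<omega>. f3 (snd (snd \<omega>)) * h (S \<omega>))"
    using integrable_coordinate_mult[of "\<lambda>\<omega>. h (S \<omega>)" K] h_bound by (simp_all add: S_def)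
  have "a3\<^sup>2 * E2 - a2\<^sup>2 * E3 = 0"
    using integral_contrast_snd_components[OF assms(1,2)] int
    by (simp add: E2_def E3_def S_def left_diff_distrib mult.assoc)
  moreover have "(a2\<^sup>2 + a3\<^sup>2) * E1 - a1\<^sup>2 * E2 - a1\<^sup>2 * E3 = 0"
  proof -
    have "(\<lambda>\<omega>. ((a2\<^sup>2 + a3\<^sup>2) * f1 (fst \<omega>) - a1\<^sup>2 * (f2 (fst (snd \<omega>)) + f3 (snd (snd \<omega>)))) * h (S \<omega>)) =
        (\<lambda>\<omega>. (a2\<^sup>2 + a3\<^sup>2) * (f1 (fst \<omega>) * h (S \<omega>)) - a1\<^sup>2 * (f2 (fst (snd \<omega>)) * h (S \<omega>))
          - a1\<^sup>2 * (f3 (snd (snd \<omega>)) * h (S \<omega>)))"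
      by (simp add: fun_eq_iff algebra_simps)
    then show ?thesis
      using integral_contrast_fst_component[OF assms(1,2)] int
      by (simp add: E1_def E2_def E3_def S_def)
  qed
  ultimately have E3: "E3 = a3\<^sup>2 * q" and E1': "(a2\<^sup>2 + a3\<^sup>2) * E1 = (a2\<^sup>2 + a3\<^sup>2) * (a1\<^sup>2 * q)"
    using sd_pos by (auto simp: q_def field_simps)
  have "a2\<^sup>2 + a3\<^sup>2 \<noteq> 0"
    using sd_pos by (simp add: add_pos_pos order.strict_implies_not_eq[symmetric])
  with E1' have "E1 = a1\<^sup>2 * q"
    by (metis mult_cancel_left)
  moreover have "E2 = a2\<^sup>2 * q"
    using sd_pos by (simp add: q_def)
  ultimately show ?thesis
    using E3 unfolding E1_def E2_def E3_def by blast
qed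

theorem integral_gauss_regression:
  assumes [measurable]: "h \<in> borel_measurable borel" and h_bound: "\<And>s. \<bar>h s\<bar> \<le> K"
  defines "S \<equiv> \<lambda>\<omega>. f1 (fst \<omega>) + f2 (fst (snd \<omega>)) + f3 (snd (snd \<omega>))"
  shows "(\<integral>\<omega>. (c1 * f1 (fst \<omega>) + c2 * f2 (fst (snd \<omega>)) + c3 * f3 (snd (snd \<omega>))) * h (S \<omega>) \<partial>M) =
    (c1 * a1\<^sup>2 + c2 * a2\<^sup>2 + c3 * a3\<^sup>2) / (a1\<^sup>2 + a2\<^sup>2 + a3\<^sup>2) * (\<integral>\<omega>. S \<omega> * h (S \<omega>) \<partial>M)"
proof -
  obtain q where E: "(\<integral>\<omega>. f1 (fst \<omega>) * h (S \<omega>) \<partial>M) = a1\<^sup>2 * q"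
      "(\<integral>\<omega>. f2 (fst (snd \<omega>)) * h (S \<omega>) \<partial>M) = a2\<^sup>2 * q" "(\<integral>\<omega>. f3 (snd (snd \<omega>)) * h (S \<omega>) \<partial>M) = a3\<^sup>2 * q"
    using integral_coordinate_mult_proportional[OF assms(1,2)] unfolding S_def by blast
  have int: "integrable M (\<lambda>\<omega>. f1 (fst \<omega>) * h (S \<omega>))" "integrable M (\<lambda>\<omega>. f2 (fst (snd \<omega>)) * h (S \<omega>))"
      "integrable M (\<lambda>\<omega>. f3 (snd (snd \<omega>)) * h (S \<omega>))"
    using integrable_coordinate_mult[of "\<lambda>\<omega>. h (S \<omega>)" K] h_bound by (simp_all add: S_def)
  have "(\<integral>\<omega>. (c1 * f1 (fst \<omega>) + c2 * f2 (fst (snd \<omega>)) + c3 * f3 (snd (snd \<omega>))) * h (S \<omega>) \<partial>M) =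
      (c1 * a1\<^sup>2 + c2 * a2\<^sup>2 + c3 * a3\<^sup>2) * q"
    using int E by (simp add: distrib_right mult.assoc algebra_simps)
  moreover have "(\<integral>\<omega>. S \<omega> * h (S \<omega>) \<partial>M) = (a1\<^sup>2 + a2\<^sup>2 + a3\<^sup>2) * q"
    using int E unfolding S_def by (simp add: distrib_right algebra_simps)
  moreover have "a1\<^sup>2 + a2\<^sup>2 + a3\<^sup>2 \<noteq> 0"
    using sd_pos by (simp add: add_pos_pos order.strict_implies_not_eq[symmetric])
  ultimately show ?thesis
    by simp
qed

lemma real_cond_exp_gauss_regression:
  assumes coeff: "\<kappa> * (a1\<^sup>2 + a2\<^sup>2 + a3\<^sup>2) = c1 * a1\<^sup>2 + c2 * a2\<^sup>2 + c3 * a3\<^sup>2"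
  defines "S \<equiv> \<lambda>\<omega>. f1 (fst \<omega>) + f2 (fst (snd \<omega>)) + f3 (snd (snd \<omega>))"
  shows "AE \<omega> in M. real_cond_exp M (vimage_algebra (space M) (\<lambda>\<omega>. \<mu> + S \<omega>) borel)
      (\<lambda>\<omega>. d + (c1 * f1 (fst \<omega>) + c2 * f2 (fst (snd \<omega>)) + c3 * f3 (snd (snd \<omega>)))) \<omega> = d + \<kappa> * S \<omega>"
proof -
  have "0 < a1\<^sup>2 + a2\<^sup>2 + a3\<^sup>2"
    using sd_pos by (simp add: add_pos_pos)
  with coeff have \<kappa>_eq: "\<kappa> = (c1 * a1\<^sup>2 + c2 * a2\<^sup>2 + c3 * a3\<^sup>2) / (a1\<^sup>2 + a2\<^sup>2 + a3\<^sup>2)"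
    by (simp add: field_simps)
  have [measurable]: "S \<in> borel_measurable M"
    unfolding S_def by measurable
  have int_1: "integrable M (\<lambda>\<omega>. f1 (fst \<omega>))" "integrable M (\<lambda>\<omega>. f2 (fst (snd \<omega>)))"
      "integrable M (\<lambda>\<omega>. f3 (snd (snd \<omega>)))"
    using integrable_coordinate_mult[of "\<lambda>_. 1" 1] by simp_all
  have "AE \<omega> in M. real_cond_exp M (vimage_algebra (space M) (\<lambda>\<omega>. \<mu> + S \<omega>) borel)
      (\<lambda>\<omega>. d + (c1 * f1 (fst \<omega>) + c2 * f2 (fst (snd \<omega>)) + c3 * f3 (snd (snd \<omega>)))) \<omega>
      = d + \<kappa> * (\<mu> + S \<omega> - \<mu>)"
  proof (rule real_cond_exp_vimage_eqI[where X = "\<lambda>\<omega>. \<mu> + S \<omega>" and w = "\<lambda>x. d + \<kappa> * (x - \<mu>)"])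
    fix B :: "real set" assume [measurable]: "B \<in> sets borel"
    define h :: "real \<Rightarrow> real" where "h u = indicator B (\<mu> + u)" for u
    have [measurable]: "h \<in> borel_measurable borel"
      unfolding h_def by measurable
    have h_bound: "\<bar>h u\<bar> \<le> 1" for u
      by (simp add: h_def indicator_def)
    then have int_h: "integrable M (\<lambda>\<omega>. h (S \<omega>))" "integrable M (\<lambda>\<omega>. S \<omega> * h (S \<omega>))"
        "integrable M (\<lambda>\<omega>. (c1 * f1 (fst \<omega>) + c2 * f2 (fst (snd \<omega>)) + c3 * f3 (snd (snd \<omega>))) * h (S \<omega>))"
      using integrable_coordinate_mult[of "\<lambda>\<omega>. h (S \<omega>)" 1] M123.integrable_const_bound[of "\<lambda>\<omega>. h (S \<omega>)" 1]
      by (auto simp: S_def distrib_right mult.assoc)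
    have "(\<integral>\<omega>. indicator B (\<mu> + S \<omega>) * (d + (c1 * f1 (fst \<omega>) + c2 * f2 (fst (snd \<omega>)) + c3 * f3 (snd (snd \<omega>)))) \<partial>M) =
        (\<integral>\<omega>. d * h (S \<omega>) + (c1 * f1 (fst \<omega>) + c2 * f2 (fst (snd \<omega>)) + c3 * f3 (snd (snd \<omega>))) * h (S \<omega>) \<partial>M)"
      by (simp add: h_def algebra_simps)
    also have "\<dots> = d * (\<integral>\<omega>. h (S \<omega>) \<partial>M) + \<kappa> * (\<integral>\<omega>. S \<omega> * h (S \<omega>) \<partial>M)"
      using int_h integral_gauss_regression[of h 1 c1 c2 c3] h_bound by (simp add: S_def \<kappa>_eq)
    also have "\<dots> = (\<integral>\<omega>. indicator B (\<mu> + S \<omega>) * (d + \<kappa> * (\<mu> + S \<omega> - \<mu>)) \<partial>M)"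
      using int_h by (simp add: h_def algebra_simps)
    finally show "(\<integral>\<omega>. indicator B (\<mu> + S \<omega>) * (d + (c1 * f1 (fst \<omega>) + c2 * f2 (fst (snd \<omega>)) + c3 * f3 (snd (snd \<omega>)))) \<partial>M) =
        (\<integral>\<omega>. indicator B (\<mu> + S \<omega>) * (d + \<kappa> * (\<mu> + S \<omega> - \<mu>)) \<partial>M)" .
  qed (use int_1 in \<open>simp_all add: M123.prob_space_axioms S_def distrib_left\<close>)
  then show ?thesis
    by simp
qed

end

definition noisy_interp :: "real \<Rightarrow> real \<Rightarrow> real \<Rightarrow> real \<Rightarrow> real" where
  "noisy_interp t x y z = (1 - t) * x + t * y + sqrt (2 * t * (1 - t)) * z"

definition noisy_interp_deriv :: "real \<Rightarrow> real \<Rightarrow> real \<Rightarrow> real \<Rightarrow> real" where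
  "noisy_interp_deriv t x y z = (y - x) + z * ((1 - 2 * t) / sqrt (2 * t * (1 - t)))"

lemma noisy_interp_0 [simp]: "noisy_interp 0 x y z = x"
  and noisy_interp_1 [simp]: "noisy_interp 1 x y z = y"
  by (simp_all add: noisy_interp_def)

lemma measurable_noisy_interp [measurable (raw)]:
  assumes [measurable]: "f \<in> borel_measurable M" "g \<in> borel_measurable M" "h \<in> borel_measurable M"
  shows "(\<lambda>w. noisy_interp t (f w) (g w) (h w)) \<in> borel_measurable M"
  unfolding noisy_interp_def by measurable

lemma continuous_on_noisy_interp: "continuous_on A (\<lambda>t. noisy_interp t x y z)"
  unfolding noisy_interp_def by (intro continuous_intros)

lemma noisy_interp_deriv_measurable [measurable]: "(\<lambda>t. noisy_interp_deriv t x y z) \<in> borel_measurable borel"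
  unfolding noisy_interp_deriv_def by measurable

lemma has_real_derivative_noisy_interp:
  assumes "0 < t" "t < 1"
  shows "((\<lambda>s. noisy_interp s x y z) has_real_derivative noisy_interp_deriv t x y z) (at t)"
proof -
  have pos: "0 < 2 * t * (1 - t)"
    using assms by simp
  have d: "((\<lambda>s. 2 * s * (1 - s)) has_real_derivative (2 - 4 * t)) (at t)"
    by (auto intro!: derivative_eq_intros simp: algebra_simps)
  have "inverse r / 2 * (2 - 4 * t) = (1 - 2 * t) / r" for r :: real
    by (cases "r = 0") (simp_all add: field_simps)
  then have chain_coeff: "inverse (sqrt (2 * t * (1 - t))) / 2 * (2 - 4 * t) = (1 - 2 * t) / sqrt (2 * t * (1 - t))" .
  have "((\<lambda>s. sqrt (2 * s * (1 - s))) has_real_derivative (1 - 2 * t) / sqrt (2 * t * (1 - t))) (at t)"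
    using DERIV_chain2[OF DERIV_real_sqrt[OF pos] d] unfolding chain_coeff by (simp add: comp_def)
  moreover have "((\<lambda>s. (1 - s) * x + s * y + g s * z) has_real_derivative (y - x) + z * D) (at t)"
    if "(g has_real_derivative D) (at t)" for g D
    using that by (auto intro!: derivative_eq_intros simp: algebra_simps)
  ultimately show ?thesis
    unfolding noisy_interp_def noisy_interp_deriv_def by blast
qed

lemma abs_noisy_interp_deriv_le:
  assumes "0 < s" "s < 1"
  shows "\<bar>noisy_interp_deriv s x y z\<bar> \<le> (\<bar>y - x\<bar> + \<bar>z\<bar>) * (s powr (1/2 - 1) * (1 - s) powr (1/2 - 1))"
proof -
  define w where "w = s * (1 - s)"
  have "0 < w" "w \<le> 1"
    using assms mult_mono[of s 1 "1 - s" 1] by (auto simp: w_def)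
  then have "0 < sqrt w" "sqrt w \<le> 1"
    by auto
  have w_powr: "s powr (1/2 - 1) * (1 - s) powr (1/2 - 1) = 1 / sqrt w"
  proof -
    have "s powr (1/2 - 1) * (1 - s) powr (1/2 - 1) = w powr (- (1/2))"
      unfolding w_def powr_mult by simp
    also have "\<dots> = 1 / sqrt w"
      using \<open>0 < w\<close> by (simp add: powr_minus powr_half_sqrt inverse_eq_divide)
    finally show ?thesis .
  qed
  have "\<bar>1 - 2 * s\<bar> \<le> 1" "sqrt w \<le> sqrt (2 * s * (1 - s))"
    using assms \<open>0 < w\<close> by (auto simp: w_def)
  then have coeff: "\<bar>(1 - 2 * s) / sqrt (2 * s * (1 - s))\<bar> \<le> 1 / sqrt w"
    unfolding abs_divide using \<open>0 < sqrt w\<close> by (intro frac_le) auto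
  have "\<bar>noisy_interp_deriv s x y z\<bar> \<le> \<bar>y - x\<bar> + \<bar>z\<bar> * \<bar>(1 - 2 * s) / sqrt (2 * s * (1 - s))\<bar>"
    unfolding noisy_interp_deriv_def abs_mult[symmetric] by (rule abs_triangle_ineq)
  also have "\<dots> \<le> \<bar>y - x\<bar> * (1 / sqrt w) + \<bar>z\<bar> * (1 / sqrt w)"
  proof -
    have "1 \<le> 1 / sqrt w"
      using \<open>0 < sqrt w\<close> \<open>sqrt w \<le> 1\<close> by simp
    from add_mono[OF mult_left_mono[OF this] mult_left_mono[OF coeff]] show ?thesis
      by simp
  qed
  finally show ?thesis
    unfolding w_powr by (simp add: algebra_simps)
qed

lemma set_integrable_noisy_interp_deriv_powr:
  assumes "0 < q" "q < 2"
  shows "set_integrable lborel {0..1} (\<lambda>s. \<bar>noisy_interp_deriv s x y z\<bar> powr q)"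
proof -
  define a where "a = 1 - q / 2"
  define K where "K = (\<bar>y - x\<bar> + \<bar>z\<bar>) powr q"
  have "set_integrable lborel {0..1} (\<lambda>s. s powr (a - 1) * (1 - s) powr (a - 1))"
    using assms by (intro integrable_Beta) (auto simp: a_def)
  then have "set_integrable lborel {0..1} (\<lambda>s. K * (s powr (a - 1) * (1 - s) powr (a - 1)))"
    by (rule set_integrable_mult_right)
  then have "integrable lborel (\<lambda>s. indicat_real {0..1} s *\<^sub>R (K * (s powr (a - 1) * (1 - s) powr (a - 1))))"
    unfolding set_integrable_def .
  then show ?thesis
    unfolding set_integrable_def
  proof (rule Bochner_Integration.integrable_bound)
    have "AE s in lborel. s \<noteq> 0" "AE s in lborel. s \<noteq> 1"
      by (rule AE_lborel_singleton)+
    then show "AE s in lborel. norm (indicat_real {0..1} s *\<^sub>R \<bar>noisy_interp_deriv s x y z\<bar> powr q)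
        \<le> norm (indicat_real {0..1} s *\<^sub>R (K * (s powr (a - 1) * (1 - s) powr (a - 1))))"
    proof eventually_elim
      case (elim s)
      show ?case
      proof (cases "s \<in> {0..1}")
        case True
        with elim have s: "0 < s" "s < 1" by auto
        have "\<bar>noisy_interp_deriv s x y z\<bar> powr q
            \<le> ((\<bar>y - x\<bar> + \<bar>z\<bar>) * (s powr (1/2 - 1) * (1 - s) powr (1/2 - 1))) powr q"
          using assms abs_noisy_interp_deriv_le[OF s] by (intro powr_mono2) auto
        also have "\<dots> = K * (s powr (a - 1) * (1 - s) powr (a - 1))"
        proof -
          have e: "(1/2 - 1) * q = a - 1" by (simp add: a_def)
          show ?thesis unfolding powr_mult powr_powr e K_def by (simp add: algebra_simps)
        qed
        finally show ?thesis
          using True by (simp add: K_def)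
      qed simp
    qed
  qed measurable
qed

lemma set_integrable_noisy_interp_deriv:
  "set_integrable lborel {0..1} (\<lambda>s. noisy_interp_deriv s x y z)"
proof -
  have "set_integrable lborel {0..1} (\<lambda>s. \<bar>noisy_interp_deriv s x y z\<bar> powr 1)"
    by (rule set_integrable_noisy_interp_deriv_powr) auto
  then have "integrable lborel (\<lambda>s. \<bar>indicat_real {0..1} s *\<^sub>R noisy_interp_deriv s x y z\<bar>)"
    unfolding set_integrable_def by (simp add: abs_mult)
  then show ?thesis
    unfolding set_integrable_def by (rule integrable_abs_cancel) measurable
qed

lemma noisy_interp_eq_integral_deriv:
  assumes "t \<in> {0..1}"
  shows "noisy_interp t x y z = x + (LINT s:{0..t}|lborel. noisy_interp_deriv s x y z)"
proof -
  have "((\<lambda>s. noisy_interp_deriv s x y z) has_integral (noisy_interp t x y z - noisy_interp 0 x y z)) {0..t}"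
  proof (rule fundamental_theorem_of_calculus_interior)
    fix s assume "s \<in> {0<..<t}"
    with assms have "0 < s" "s < 1" by auto
    from has_real_derivative_noisy_interp[OF this]
    show "((\<lambda>s. noisy_interp s x y z) has_vector_derivative noisy_interp_deriv s x y z) (at s)"
      by (simp add: has_real_derivative_iff_has_vector_derivative)
  qed (use assms continuous_on_noisy_interp in auto)
  moreover have "set_integrable lborel {0..t} (\<lambda>s. noisy_interp_deriv s x y z)"
    using assms by (intro set_integrable_subset[OF set_integrable_noisy_interp_deriv]) auto
  ultimately show ?thesis
    by (simp add: set_borel_integral_eq_integral(2) integral_unique)
qed

lemma W1p_noisy_interp:
  assumes "0 < p" "p < 2"
  shows "W1p p (\<lambda>t. noisy_interp t x y z)"
  unfolding W1p_def
  using assms noisy_interp_eq_integral_deriv set_integrable_noisy_interp_deriv_powr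
    set_integrable_noisy_interp_deriv
  by (intro exI[of _ "\<lambda>s. noisy_interp_deriv s x y z"] exI[of _ x] conjI AE_I2) auto

lemma gen_interpolant_noisy_interp:
  assumes "0 < p" "p < 2" "prob_space Q" "sets Q = sets borel" "absolutely_continuous lborel Q"
  shows "gen_interpolant p noisy_interp Q"
proof -
  have "(\<lambda>(t, x, y, z). noisy_interp t x y z) \<in> borel_measurable (borel :: (real \<times> real \<times> real \<times> real) measure)"
    unfolding borel_prod[symmetric] noisy_interp_def by measurable
  then have "base_interp_path p noisy_interp"
    unfolding base_interp_path_def using W1p_noisy_interp[OF assms(1,2)]
    by (auto intro: measurable_restrict_space1)
  with assms show ?thesis
    by (simp add: gen_interpolant_def)
qed

lemma in_S_noisy_interp:
  assumes "prob_space P0" "prob_space P1" "prob_space Q"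
    and [measurable_cong]: "sets P0 = sets borel" "sets P1 = sets borel" "sets Q = sets borel"
  shows "in_S (induced_space P0 P1 Q) (induced_process noisy_interp) P0 P1"
proof -
  interpret P1Q: pair_prob_space P1 Q
    using assms(2,3) by (simp add: pair_prob_space_def pair_sigma_finite_def prob_space_imp_sigma_finite)
  interpret P0P1Q: pair_prob_space P0 "P1 \<Otimes>\<^sub>M Q"
    using assms(1) P1Q.prob_space_axioms
    by (simp add: pair_prob_space_def pair_sigma_finite_def prob_space_imp_sigma_finite)
  have "distr P0 borel (\<lambda>x. x) = P0"
    by (rule distr_id2) (simp add: assms(4))
  moreover have "distr (P1 \<Otimes>\<^sub>M Q) borel fst = P1"
    using P1Q.M2.distr_pair_fst[of P1] by (metis assms(5) distr_cong)
  ultimately have distr_X01: "distr (P0 \<Otimes>\<^sub>M (P1 \<Otimes>\<^sub>M Q)) (borel \<Otimes>\<^sub>M borel) (\<lambda>\<omega>. (fst \<omega>, fst (snd \<omega>))) = P0 \<Otimes>\<^sub>M P1"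
    using distr_pair_comp[OF assms(1) P1Q.prob_space_axioms, of "\<lambda>x. x" fst] by simp
  have X_measurable: "(\<lambda>\<omega>. noisy_interp t (fst \<omega>) (fst (snd \<omega>)) (snd (snd \<omega>))) \<in> borel_measurable (P0 \<Otimes>\<^sub>M (P1 \<Otimes>\<^sub>M Q))" for t
    by measurable
  show ?thesis
    unfolding in_S_def induced_space_def induced_process_def
  proof (intro conjI ballI)
    show "prob_space (P0 \<Otimes>\<^sub>M (P1 \<Otimes>\<^sub>M Q))"
      by (rule P0P1Q.prob_space_axioms)
    show "(\<lambda>\<omega>. noisy_interp t (fst \<omega>) (fst (snd \<omega>)) (snd (snd \<omega>))) \<in> borel_measurable (P0 \<Otimes>\<^sub>M (P1 \<Otimes>\<^sub>M Q))" for t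
      by (rule X_measurable)
    show "AE \<omega> in P0 \<Otimes>\<^sub>M (P1 \<Otimes>\<^sub>M Q). continuous_on {0..1} (\<lambda>t. noisy_interp t (fst \<omega>) (fst (snd \<omega>)) (snd (snd \<omega>)))"
      by (intro AE_I2 continuous_on_noisy_interp)
    show "distr (P0 \<Otimes>\<^sub>M (P1 \<Otimes>\<^sub>M Q)) (borel \<Otimes>\<^sub>M borel)
        (\<lambda>\<omega>. (noisy_interp 0 (fst \<omega>) (fst (snd \<omega>)) (snd (snd \<omega>)), noisy_interp 1 (fst \<omega>) (fst (snd \<omega>)) (snd (snd \<omega>)))) =
        P0 \<Otimes>\<^sub>M P1"
      using distr_X01 by simp
  qed
qed

definition gauss_geodesic_velocity :: "real \<Rightarrow> real \<Rightarrow> real \<Rightarrow> real \<Rightarrow> real \<Rightarrow> real \<Rightarrow> real" where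
  "gauss_geodesic_velocity m0 m1 \<sigma>0 \<sigma>1 t x =
     (m1 - m0) + (\<sigma>1 - \<sigma>0) / ((1 - t) * \<sigma>0 + t * \<sigma>1) * (x - ((1 - t) * m0 + t * m1))"

(* The displacement interpolation (Wasserstein geodesic) between N(m0, sigma0^2) and N(m1, sigma1^2). *)
definition gauss_geodesic_flow :: "real \<Rightarrow> real \<Rightarrow> real \<Rightarrow> real \<Rightarrow> real \<Rightarrow> real \<Rightarrow> real" where
  "gauss_geodesic_flow m0 m1 \<sigma>0 \<sigma>1 t x = (1 - t) * m0 + t * m1 + ((1 - t) * \<sigma>0 + t * \<sigma>1) / \<sigma>0 * (x - m0)"

lemma interpolated_sd_pos:
  fixes \<sigma>0 \<sigma>1 t :: real
  assumes "0 < \<sigma>0" "0 < \<sigma>1" "t \<in> {0..1}"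
  shows "0 < (1 - t) * \<sigma>0 + t * \<sigma>1"
proof (cases "t < 1")
  case True
  then have "0 < 1 - t"
    by simp
  with assms have "0 < (1 - t) * \<sigma>0" "0 \<le> t * \<sigma>1"
    by simp_all
  then show ?thesis by linarith
next
  case False
  with assms show ?thesis by simp
qed

lemma centered_gauss_triple_noisy_interp:
  assumes t: "0 < t" "t < 1" and pos: "0 < \<sigma>0" "0 < \<sigma>1"
  shows "centered_gauss_triple (gauss m0 \<sigma>0) (gauss m1 \<sigma>1) (gauss 0 (sqrt (\<sigma>0 * \<sigma>1)))
    (\<lambda>x. (1 - t) * (x - m0)) (\<lambda>y. t * (y - m1)) (\<lambda>z. sqrt (2 * t * (1 - t)) * z)
    ((1 - t) * \<sigma>0) (t * \<sigma>1) (sqrt (2 * t * (1 - t)) * sqrt (\<sigma>0 * \<sigma>1))"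
proof (intro centered_gauss_triple.intro centered_gauss_triple_axioms.intro prob_space_gauss)
  show "(\<lambda>x. (1 - t) * (x - m0)) \<in> borel_measurable (gauss m0 \<sigma>0)"
    by measurable
  show "(\<lambda>y. t * (y - m1)) \<in> borel_measurable (gauss m1 \<sigma>1)"
    by measurable
  show "(\<lambda>z. sqrt (2 * t * (1 - t)) * z) \<in> borel_measurable (gauss 0 (sqrt (\<sigma>0 * \<sigma>1)))"
    by measurable
  show "distr (gauss m0 \<sigma>0) borel (\<lambda>x. (1 - t) * (x - m0)) = gauss 0 ((1 - t) * \<sigma>0)"
    using distr_gauss_affine[OF pos(1), of "1 - t" m0 "- (1 - t) * m0"] t by (simp add: algebra_simps)
  show "distr (gauss m1 \<sigma>1) borel (\<lambda>y. t * (y - m1)) = gauss 0 (t * \<sigma>1)"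
    using distr_gauss_affine[OF pos(2), of t m1 "- t * m1"] t by (simp add: algebra_simps)
  show "distr (gauss 0 (sqrt (\<sigma>0 * \<sigma>1))) borel (\<lambda>z. sqrt (2 * t * (1 - t)) * z) =
      gauss 0 (sqrt (2 * t * (1 - t)) * sqrt (\<sigma>0 * \<sigma>1))"
    using distr_gauss_affine[of "sqrt (\<sigma>0 * \<sigma>1)" "sqrt (2 * t * (1 - t))" 0 0] t pos by simp
qed (use t pos in simp_all)

lemma noisy_interp_regression_coeff:
  fixes \<sigma>0 \<sigma>1 t :: real
  assumes "0 < t" "t < 1" "0 < \<sigma>0" "0 < \<sigma>1"
  defines "c \<equiv> sqrt (2 * t * (1 - t))"
  shows "(\<sigma>1 - \<sigma>0) / ((1 - t) * \<sigma>0 + t * \<sigma>1) *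
      (((1 - t) * \<sigma>0)\<^sup>2 + (t * \<sigma>1)\<^sup>2 + (c * sqrt (\<sigma>0 * \<sigma>1))\<^sup>2) =
    - 1 / (1 - t) * ((1 - t) * \<sigma>0)\<^sup>2 + 1 / t * (t * \<sigma>1)\<^sup>2 + (1 - 2 * t) / c\<^sup>2 * (c * sqrt (\<sigma>0 * \<sigma>1))\<^sup>2"
proof -
  define S where "S = (1 - t) * \<sigma>0 + t * \<sigma>1"
  have "0 < S"
    using assms by (simp add: S_def add_pos_pos)
  have "0 < c" and c_sq: "c\<^sup>2 = 2 * t * (1 - t)"
    using assms by (simp_all add: c_def)
  have sq: "(c * sqrt (\<sigma>0 * \<sigma>1))\<^sup>2 = c\<^sup>2 * (\<sigma>0 * \<sigma>1)"
    using assms by (simp add: power_mult_distrib)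
  have "((1 - t) * \<sigma>0)\<^sup>2 + (t * \<sigma>1)\<^sup>2 + (c * sqrt (\<sigma>0 * \<sigma>1))\<^sup>2 = S\<^sup>2"
    unfolding sq c_sq S_def by (simp add: power2_eq_square algebra_simps)
  moreover have "- 1 / (1 - t) * ((1 - t) * \<sigma>0)\<^sup>2 + 1 / t * (t * \<sigma>1)\<^sup>2 + (1 - 2 * t) / c\<^sup>2 * (c * sqrt (\<sigma>0 * \<sigma>1))\<^sup>2
      = (\<sigma>1 - \<sigma>0) * S"
    unfolding sq using assms(1,2) \<open>0 < c\<close> by (simp add: S_def power2_eq_square field_simps)
  ultimately show ?thesis
    unfolding S_def[symmetric] using \<open>0 < S\<close> by (simp add: power2_eq_square)
qed

lemma velocity_noisy_interp_cond_exp: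
  fixes m0 m1 \<sigma>0 \<sigma>1 t :: real
  assumes t: "0 < t" "t < 1" and pos: "0 < \<sigma>0" "0 < \<sigma>1"
  defines "M \<equiv> induced_space (gauss m0 \<sigma>0) (gauss m1 \<sigma>1) (gauss 0 (sqrt (\<sigma>0 * \<sigma>1)))"
  shows "integrable M (velocity (induced_process noisy_interp) t)"
    and "AE \<omega> in M. real_cond_exp M (vimage_algebra (space M) (induced_process noisy_interp t) borel)
      (velocity (induced_process noisy_interp) t) \<omega> = gauss_geodesic_velocity m0 m1 \<sigma>0 \<sigma>1 t (induced_process noisy_interp t \<omega>)"
proof -
  define c where "c = sqrt (2 * t * (1 - t))"
  define \<mu> where "\<mu> = (1 - t) * m0 + t * m1"
  define k where "k = (\<sigma>1 - \<sigma>0) / ((1 - t) * \<sigma>0 + t * \<sigma>1)"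
  have "0 < c"
    using t by (simp add: c_def)
  interpret G: centered_gauss_triple "gauss m0 \<sigma>0" "gauss m1 \<sigma>1" "gauss 0 (sqrt (\<sigma>0 * \<sigma>1))"
      "\<lambda>x. (1 - t) * (x - m0)" "\<lambda>y. t * (y - m1)" "\<lambda>z. c * z" "(1 - t) * \<sigma>0" "t * \<sigma>1" "c * sqrt (\<sigma>0 * \<sigma>1)"
    unfolding c_def by (rule centered_gauss_triple_noisy_interp[OF t pos])
  have M_eq: "M = gauss m0 \<sigma>0 \<Otimes>\<^sub>M (gauss m1 \<sigma>1 \<Otimes>\<^sub>M gauss 0 (sqrt (\<sigma>0 * \<sigma>1)))"
    by (simp add: M_def induced_space_def)
  have X_eq: "induced_process noisy_interp t =
      (\<lambda>\<omega>. \<mu> + ((1 - t) * (fst \<omega> - m0) + t * (fst (snd \<omega>) - m1) + c * snd (snd \<omega>)))"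
    by (simp add: fun_eq_iff induced_process_def noisy_interp_def \<mu>_def c_def algebra_simps)
  have "velocity (induced_process noisy_interp) t \<omega> = (m1 - m0) + (- 1 / (1 - t) * ((1 - t) * (fst \<omega> - m0))
      + 1 / t * (t * (fst (snd \<omega>) - m1)) + (1 - 2 * t) / c\<^sup>2 * (c * snd (snd \<omega>)))" for \<omega>
  proof -
    have "velocity (induced_process noisy_interp) t \<omega> = (fst (snd \<omega>) - fst \<omega>) + snd (snd \<omega>) * ((1 - 2 * t) / c)"
      unfolding velocity_def induced_process_def c_def
      by (rule DERIV_imp_deriv[OF has_real_derivative_noisy_interp[OF t], unfolded noisy_interp_deriv_def])
    also have "\<dots> = (m1 - m0) + (- 1 / (1 - t) * ((1 - t) * (fst \<omega> - m0))
        + 1 / t * (t * (fst (snd \<omega>) - m1)) + (1 - 2 * t) / c\<^sup>2 * (c * snd (snd \<omega>)))"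
      using t \<open>0 < c\<close> by (simp add: field_simps power2_eq_square)
    finally show ?thesis .
  qed
  then have V_eq: "velocity (induced_process noisy_interp) t = (\<lambda>\<omega>. (m1 - m0) + (- 1 / (1 - t) * ((1 - t) * (fst \<omega> - m0))
      + 1 / t * (t * (fst (snd \<omega>) - m1)) + (1 - 2 * t) / c\<^sup>2 * (c * snd (snd \<omega>))))"
    by (simp add: fun_eq_iff)
  have w_eq: "gauss_geodesic_velocity m0 m1 \<sigma>0 \<sigma>1 t (\<mu> + u) = (m1 - m0) + k * u" for u
    by (simp add: gauss_geodesic_velocity_def k_def \<mu>_def)
  show "integrable M (velocity (induced_process noisy_interp) t)"
    unfolding V_eq M_eq by (rule G.integrable_affine_combination)
  show "AE \<omega> in M. real_cond_exp M (vimage_algebra (space M) (induced_process noisy_interp t) borel)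
      (velocity (induced_process noisy_interp) t) \<omega> = gauss_geodesic_velocity m0 m1 \<sigma>0 \<sigma>1 t (induced_process noisy_interp t \<omega>)"
    using G.real_cond_exp_gauss_regression[OF noisy_interp_regression_coeff[OF t pos, folded c_def k_def], of \<mu> "m1 - m0"]
    unfolding X_eq V_eq M_eq w_eq by simp
qed

lemma is_cond_velocity_noisy_interp:
  assumes "0 < \<sigma>0" "0 < \<sigma>1"
  shows "is_cond_velocity (induced_space (gauss m0 \<sigma>0) (gauss m1 \<sigma>1) (gauss 0 (sqrt (\<sigma>0 * \<sigma>1))))
    (induced_process noisy_interp) (gauss_geodesic_velocity m0 m1 \<sigma>0 \<sigma>1)"
proof -
  let ?M = "induced_space (gauss m0 \<sigma>0) (gauss m1 \<sigma>1) (gauss 0 (sqrt (\<sigma>0 * \<sigma>1)))"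
  have "AE t in lborel. t \<noteq> 0" "AE t in lborel. t \<noteq> 1"
    by (rule AE_lborel_singleton)+
  then show ?thesis
    unfolding is_cond_velocity_def
  proof eventually_elim
    case (elim t)
    then have "t \<in> {0..1} \<Longrightarrow> 0 < t \<and> t < 1"
      by auto
    moreover have "AE \<omega> in ?M. (\<lambda>s. induced_process noisy_interp s \<omega>) differentiable (at t)"
      if "0 < t" "t < 1"
      using has_real_derivative_noisy_interp[OF that]
      by (auto simp: induced_process_def real_differentiable_def intro!: AE_I2)
    ultimately show ?case
      using velocity_noisy_interp_cond_exp[OF _ _ assms] by blast
  qed
qed

lemma gauss_geodesic_velocity_measurable:
  "(\<lambda>(t, x). gauss_geodesic_velocity m0 m1 \<sigma>0 \<sigma>1 t x) \<in> borel_measurable (restrict_space borel ({0..1} \<times> UNIV))"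
proof -
  have "(\<lambda>(t, x). gauss_geodesic_velocity m0 m1 \<sigma>0 \<sigma>1 t x) \<in> borel_measurable (borel :: (real \<times> real) measure)"
    unfolding borel_prod[symmetric] gauss_geodesic_velocity_def by measurable
  then show ?thesis
    by (rule measurable_restrict_space1)
qed

lemma lipschitz_gauss_geodesic_velocity:
  assumes "0 < \<sigma>0" "0 < \<sigma>1"
  shows "\<exists>L. \<forall>t\<in>{0..1}. L-lipschitz_on UNIV (gauss_geodesic_velocity m0 m1 \<sigma>0 \<sigma>1 t)"
proof (intro exI ballI lipschitz_onI)
  define L where "L = \<bar>\<sigma>1 - \<sigma>0\<bar> / min \<sigma>0 \<sigma>1"
  fix t x y :: real assume t: "t \<in> {0..1}"
  define S where "S = (1 - t) * \<sigma>0 + t * \<sigma>1"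
  have "0 < S"
    unfolding S_def using interpolated_sd_pos[OF assms t] .
  have "min \<sigma>0 \<sigma>1 = (1 - t) * min \<sigma>0 \<sigma>1 + t * min \<sigma>0 \<sigma>1"
    by (simp add: algebra_simps)
  also have "\<dots> \<le> S"
    unfolding S_def using t by (intro add_mono mult_left_mono) auto
  finally have "min \<sigma>0 \<sigma>1 \<le> S" .
  have "gauss_geodesic_velocity m0 m1 \<sigma>0 \<sigma>1 t x - gauss_geodesic_velocity m0 m1 \<sigma>0 \<sigma>1 t y =
      (\<sigma>1 - \<sigma>0) / S * (x - y)"
    unfolding gauss_geodesic_velocity_def S_def[symmetric] using \<open>0 < S\<close> by (simp add: field_simps)
  then have "dist (gauss_geodesic_velocity m0 m1 \<sigma>0 \<sigma>1 t x) (gauss_geodesic_velocity m0 m1 \<sigma>0 \<sigma>1 t y) =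
      \<bar>\<sigma>1 - \<sigma>0\<bar> / S * dist x y"
    using \<open>0 < S\<close> by (simp add: dist_real_def abs_mult abs_divide)
  also have "\<dots> \<le> L * dist x y"
    unfolding L_def using assms \<open>0 < S\<close> \<open>min \<sigma>0 \<sigma>1 \<le> S\<close>
    by (intro mult_right_mono divide_left_mono) auto
  finally show "dist (gauss_geodesic_velocity m0 m1 \<sigma>0 \<sigma>1 t x) (gauss_geodesic_velocity m0 m1 \<sigma>0 \<sigma>1 t y)
      \<le> L * dist x y" .
  show "0 \<le> L"
    unfolding L_def using assms by simp
qed

lemma continuous_on_gauss_geodesic_velocity:
  assumes "0 < \<sigma>0" "0 < \<sigma>1"
  shows "continuous_on ({0..1} \<times> UNIV) (\<lambda>(t, x). gauss_geodesic_velocity m0 m1 \<sigma>0 \<sigma>1 t x)"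
  unfolding gauss_geodesic_velocity_def case_prod_beta
  using interpolated_sd_pos[OF assms]
  by (intro continuous_intros) (auto simp: less_imp_neq[symmetric])

lemma gauss_geodesic_velocity_along_flow:
  assumes "0 < \<sigma>0" "0 < \<sigma>1" "t \<in> {0..1}"
  shows "gauss_geodesic_velocity m0 m1 \<sigma>0 \<sigma>1 t (gauss_geodesic_flow m0 m1 \<sigma>0 \<sigma>1 t x) =
    (m1 - m0) + (\<sigma>1 - \<sigma>0) / \<sigma>0 * (x - m0)"
proof -
  define S where "S = (1 - t) * \<sigma>0 + t * \<sigma>1"
  have "S \<noteq> 0"
    using interpolated_sd_pos[OF assms] by (simp add: S_def)
  then show ?thesis
    unfolding gauss_geodesic_velocity_def gauss_geodesic_flow_def S_def[symmetric]
    using assms(1) by (simp add: field_simps)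
qed

lemma has_real_derivative_gauss_geodesic_flow:
  assumes "\<sigma>0 \<noteq> 0"
  shows "((\<lambda>s. gauss_geodesic_flow m0 m1 \<sigma>0 \<sigma>1 s x) has_real_derivative
    (m1 - m0) + (\<sigma>1 - \<sigma>0) / \<sigma>0 * (x - m0)) (at t within A)"
  unfolding gauss_geodesic_flow_def using assms
  by (auto intro!: derivative_eq_intros simp: field_simps)

lemma is_flow_gauss_geodesic_flow:
  assumes "0 < \<sigma>0" "0 < \<sigma>1"
  shows "is_flow (gauss_geodesic_velocity m0 m1 \<sigma>0 \<sigma>1) (gauss_geodesic_flow m0 m1 \<sigma>0 \<sigma>1)"
  unfolding is_flow_def
proof (intro allI ballI conjI)
  fix x t :: real assume t: "t \<in> {0..1}"
  define C where "C = (m1 - m0) + (\<sigma>1 - \<sigma>0) / \<sigma>0 * (x - m0)"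
  have v_const: "gauss_geodesic_velocity m0 m1 \<sigma>0 \<sigma>1 s (gauss_geodesic_flow m0 m1 \<sigma>0 \<sigma>1 s x) = C"
    if "s \<in> {0..t}" for s
    unfolding C_def using that t by (intro gauss_geodesic_velocity_along_flow[OF assms]) auto
  have "set_integrable lborel {0..t} (\<lambda>s. C)"
    unfolding set_integrable_def by (rule borel_integrable_compact) auto
  then show "set_integrable lborel {0..t}
      (\<lambda>s. gauss_geodesic_velocity m0 m1 \<sigma>0 \<sigma>1 s (gauss_geodesic_flow m0 m1 \<sigma>0 \<sigma>1 s x))"
    by (rule set_integrable_cong[THEN iffD1, rotated -1]) (use v_const in auto)
  have "(LINT s:{0..t}|lborel. gauss_geodesic_velocity m0 m1 \<sigma>0 \<sigma>1 s (gauss_geodesic_flow m0 m1 \<sigma>0 \<sigma>1 s x)) =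
      (LINT s:{0..t}|lborel. C)"
    by (rule set_lebesgue_integral_cong) (use v_const in auto)
  also have "\<dots> = t * C"
    using t by (simp add: set_integral_const)
  finally show "gauss_geodesic_flow m0 m1 \<sigma>0 \<sigma>1 t x =
      x + (LINT s:{0..t}|lborel. gauss_geodesic_velocity m0 m1 \<sigma>0 \<sigma>1 s (gauss_geodesic_flow m0 m1 \<sigma>0 \<sigma>1 s x))"
    using assms by (simp add: C_def gauss_geodesic_flow_def field_simps)
qed

lemma is_flow_eq_integral:
  assumes "is_flow v \<psi>" "s \<in> {0..1}"
  shows "(\<lambda>r. v r (\<psi> r x)) integrable_on {0..s}"
    and "\<psi> s x = x + integral {0..s} (\<lambda>r. v r (\<psi> r x))"
proof -
  have "set_integrable lborel {0..s} (\<lambda>r. v r (\<psi> r x))"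
    and "\<psi> s x = x + (LINT r:{0..s}|lborel. v r (\<psi> r x))"
    using assms unfolding is_flow_def by blast+
  then show "(\<lambda>r. v r (\<psi> r x)) integrable_on {0..s}"
    and "\<psi> s x = x + integral {0..s} (\<lambda>r. v r (\<psi> r x))"
    by (simp_all add: set_borel_integral_eq_integral)
qed

lemma is_flow_has_real_derivative:
  assumes flow: "is_flow v \<psi>" and cont: "continuous_on ({0..1} \<times> UNIV) (\<lambda>(t, y). v t y)"
    and t: "t \<in> {0..1}"
  shows "((\<lambda>s. \<psi> s x) has_real_derivative v t (\<psi> t x)) (at t within {0..1})"
proof -
  define u where "u s = v s (\<psi> s x)" for s
  have \<psi>_eq: "\<psi> s x = x + integral {0..s} u" if "s \<in> {0..1}" for s
    unfolding u_def by (rule is_flow_eq_integral(2)[OF flow that])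
  have "u integrable_on {0..1}"
    unfolding u_def by (rule is_flow_eq_integral(1)[OF flow]) simp
  then have "continuous_on {0..1} (\<lambda>s. x + integral {0..s} u)"
    by (intro continuous_intros indefinite_integral_continuous_1)
  then have "continuous_on {0..1} (\<lambda>s. \<psi> s x)"
    by (rule continuous_on_eq) (use \<psi>_eq in auto)
  then have "continuous_on {0..1} (\<lambda>s. (s, \<psi> s x))"
    by (intro continuous_intros)
  from continuous_on_compose2[OF cont this]
  have "continuous_on {0..1} u"
    by (auto simp: u_def)
  from integral_has_vector_derivative[OF this t]
  have "((\<lambda>s. x + integral {0..s} u) has_real_derivative u t) (at t within {0..1})"
    unfolding has_real_derivative_iff_has_vector_derivative[symmetric]
    by (auto intro!: derivative_eq_intros)
  then have "((\<lambda>s. \<psi> s x) has_real_derivative u t) (at t within {0..1})"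
    by (rule has_field_derivative_transform_within[OF _ zero_less_one t]) (use \<psi>_eq in auto)
  then show ?thesis
    by (simp add: u_def)
qed

lemma is_flow_gauss_geodesic_unique:
  assumes pos: "0 < \<sigma>0" "0 < \<sigma>1" and flow: "is_flow (gauss_geodesic_velocity m0 m1 \<sigma>0 \<sigma>1) \<psi>"
    and t: "t \<in> {0..1}"
  shows "\<psi> t x = gauss_geodesic_flow m0 m1 \<sigma>0 \<sigma>1 t x"
proof -
  define S where "S s = (1 - s) * \<sigma>0 + s * \<sigma>1" for s
  define w where "w s = (\<psi> s x - ((1 - s) * m0 + s * m1)) / S s" for s
  have S_nz: "S s \<noteq> 0" if "s \<in> {0..1}" for s
    using interpolated_sd_pos[OF pos that] by (simp add: S_def)
  have "(w has_real_derivative 0) (at s within {0..1})" if s: "s \<in> {0..1}" for s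
  proof -
    have "((\<lambda>s. \<psi> s x - ((1 - s) * m0 + s * m1)) has_real_derivative
        gauss_geodesic_velocity m0 m1 \<sigma>0 \<sigma>1 s (\<psi> s x) - (m1 - m0)) (at s within {0..1})"
      using is_flow_has_real_derivative[OF flow continuous_on_gauss_geodesic_velocity[OF pos] s]
      by (auto intro!: derivative_eq_intros)
    moreover have "(S has_real_derivative \<sigma>1 - \<sigma>0) (at s within {0..1})"
      unfolding S_def[abs_def] by (auto intro!: derivative_eq_intros)
    ultimately have "(w has_real_derivative
        ((gauss_geodesic_velocity m0 m1 \<sigma>0 \<sigma>1 s (\<psi> s x) - (m1 - m0)) * S s
          - (\<sigma>1 - \<sigma>0) * (\<psi> s x - ((1 - s) * m0 + s * m1))) / (S s ^ Suc (Suc 0))) (at s within {0..1})"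
      unfolding w_def[abs_def] using S_nz[OF s] by (rule DERIV_quotient)
    moreover have "(gauss_geodesic_velocity m0 m1 \<sigma>0 \<sigma>1 s (\<psi> s x) - (m1 - m0)) * S s
        - (\<sigma>1 - \<sigma>0) * (\<psi> s x - ((1 - s) * m0 + s * m1)) = 0"
      unfolding gauss_geodesic_velocity_def S_def[symmetric] using S_nz[OF s] by (simp add: field_simps)
    ultimately show ?thesis
      by simp
  qed
  then obtain c where c: "\<And>s. s \<in> {0..1} \<Longrightarrow> w s = c"
    using has_field_derivative_zero_constant[of "{0..1}" w] by auto
  have "\<psi> 0 x = x"
    using is_flow_eq_integral(2)[OF flow, of 0] by simp
  then have "w 0 = (x - m0) / \<sigma>0"
    by (simp add: w_def S_def)
  with c[of 0] c[OF t] have "(\<psi> t x - ((1 - t) * m0 + t * m1)) / S t = (x - m0) / \<sigma>0"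
    by (simp add: w_def)
  then show ?thesis
    unfolding gauss_geodesic_flow_def S_def[symmetric] using S_nz[OF t] pos by (simp add: field_simps)
qed

lemma second_deriv_zero_gauss_geodesic:
  assumes pos: "0 < \<sigma>0" "0 < \<sigma>1" and flow: "is_flow (gauss_geodesic_velocity m0 m1 \<sigma>0 \<sigma>1) \<psi>"
  shows "second_deriv_zero \<psi>"
  unfolding second_deriv_zero_def
proof
  fix x :: real
  define C where "C = (m1 - m0) + (\<sigma>1 - \<sigma>0) / \<sigma>0 * (x - m0)"
  have "((\<lambda>s. \<psi> s x) has_real_derivative C) (at t within {0..1})" if t: "t \<in> {0..1}" for t
    unfolding C_def
    by (rule has_field_derivative_transform_within[OF has_real_derivative_gauss_geodesic_flow zero_less_one t])
       (use is_flow_gauss_geodesic_unique[OF pos flow] pos in auto)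
  then show "\<exists>d. (\<forall>t\<in>{0..1}. ((\<lambda>s. \<psi> s x) has_real_derivative d t) (at t within {0..1})) \<and>
      (\<forall>t\<in>{0..1}. (d has_real_derivative 0) (at t within {0..1}))"
    by (intro exI[of _ "\<lambda>_. C"]) auto
qed

theorem proposition3p5:
  fixes p m0 m1 \<sigma>0 \<sigma>1 :: real
  assumes "1 \<le> p" and "p < 2"
    and "\<sigma>0 > 0" and "\<sigma>1 > 0"
  shows "in_F_SL p
           (\<lambda>t x y z. (1 - t) * x + t * y + sqrt (2 * t * (1 - t)) * z)
           (gauss 0 (sqrt (\<sigma>0 * \<sigma>1)))
           (gauss m0 \<sigma>0) (gauss m1 \<sigma>1)"
proof -
  have F: "(\<lambda>t x y z. (1 - t) * x + t * y + sqrt (2 * t * (1 - t)) * z) = noisy_interp"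
    by (simp add: fun_eq_iff noisy_interp_def)
  let ?M = "induced_space (gauss m0 \<sigma>0) (gauss m1 \<sigma>1) (gauss 0 (sqrt (\<sigma>0 * \<sigma>1)))"
  have Q: "0 < sqrt (\<sigma>0 * \<sigma>1)"
    using assms by simp
  have "gen_interpolant p noisy_interp (gauss 0 (sqrt (\<sigma>0 * \<sigma>1)))"
    using assms Q by (intro gen_interpolant_noisy_interp prob_space_gauss absolutely_continuous_gauss) auto
  moreover have "in_S ?M (induced_process noisy_interp) (gauss m0 \<sigma>0) (gauss m1 \<sigma>1)"
    using assms Q by (intro in_S_noisy_interp prob_space_gauss) auto
  moreover have "\<exists>v. is_cond_velocity ?M (induced_process noisy_interp) v \<and>
      (\<lambda>(t, x). v t x) \<in> borel_measurable (restrict_space borel ({0..1} \<times> UNIV)) \<and>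
      (\<exists>L. \<forall>t\<in>{0..1}. L-lipschitz_on UNIV (v t)) \<and> (\<exists>\<phi>. is_flow v \<phi>) \<and>
      (\<forall>\<phi>. is_flow v \<phi> \<longrightarrow> second_deriv_zero \<phi>)"
    using is_cond_velocity_noisy_interp[OF assms(3,4), of m0 m1]
      gauss_geodesic_velocity_measurable[of m0 m1 \<sigma>0 \<sigma>1]
      lipschitz_gauss_geodesic_velocity[OF assms(3,4), of m0 m1]
      is_flow_gauss_geodesic_flow[OF assms(3,4), of m0 m1]
      second_deriv_zero_gauss_geodesic[OF assms(3,4), of m0 m1]
    by blast
  ultimately show ?thesis
    unfolding F in_F_SL_def in_S_SL_def using absolutely_continuous_gauss by simp
qed

end
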